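(* Let $m_0>0$ and $U_0>0$ with $m_0\le U_0$. There exist parameters $\eta>0$ and $\alpha\in[0,1]$, depending only on $m_0,U_0,d$, such that the fixed-share algorithm with these parameters satisfies the following: for all $T\ge1$, all loss vectors $\ell_1,\dots,\ell_T\in[0,1]^d$, and all $u_1,\dots,u_T\in\mathbb R_+^d$ with $\|u_1\|_1+m(u_1^T)\le m_0$ and $\sum_{t=1}^T\|u_t\|_1\le U_0$, \[ \sum_{t=1}^T\|u_t\|_1\hat p_t^\top\ell_t-\sum_{t=1}^Tu_t^\top\ell_t\le\sqrt{\frac{U_0}{2}\Big(m_0\ln d+U_0\,h\Big(\frac{m_0}{U_0}\Big)\Big)}\le\sqrt{\frac{U_0m_0}{2}\Big(\ln d+\ln\frac{eU_0}{m_0}\Big)}. \]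
   Context: Let $d\ge1$ and $\Delta_d=\{q\in[0,1]^d:\sum_{i=1}^d q_i=1\}$. The generalized share algorithm with learning rate $\eta>0$ and mixing functions $\psi_t:[0,1]^{td}\to\Delta_d$ ($t\ge2$) works as follows: $\hat p_1=v_1=(1/d,\dots,1/d)$. At each round $t=1,2,\dots$ it predicts $\hat p_t=(\hat p_{1,t},\dots,\hat p_{d,t})\in\Delta_d$, observes a loss vector $\ell_t=(\ell_{1,t},\dots,\ell_{d,t})\in[0,1]^d$ (arbitrary), and suffers loss $\hat p_t^\top\ell_t$. It then forms the pre-weights $v_{j,t+1}=\hat p_{j,t}e^{-\eta\ell_{j,t}}/\sum_{i=1}^d\hat p_{i,t}e^{-\eta\ell_{i,t}}$ for $j=1,\dots,d$, sets $v_{t+1}=(v_{1,t+1},\dots,v_{d,t+1})$, and defines $\hat p_{t+1}=\psi_{t+1}(V_{t+1})$ where $V_{t+1}=[v_{i,s}]_{1\le i\le d,1\le s\le t+1}$ is the $d\times(t+1)$ matrix of all pre-weights so far. The fixed-share algorithm with parameters $\eta>0$, $\alpha\in[0,1]$ is the generalized share algorithm with the mixing rule $\hat p_{j,t+1}=\alpha/d+(1-\alpha)v_{j,t+1}$ for all $j$ and $t\ge1$. For $x,y\in\mathbb R_+^d$, $D_{\mathrm{TV}}(x,y)=\sum_{i:\,x_i\ge y_i}(x_i-y_i)$, and for $u_1,\dots,u_T\in\mathbb R_+^d$, $m(u_1^T)=\sum_{t=2}^T D_{\mathrm{TV}}(u_t,u_{t-1})$. $h(x)=-x\ln x-(1-x)\ln(1-x)$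 is the binary entropy on $[0,1]$ (with $0\ln0=0$). *)

theory Defs
  imports Complex_Main
begin

text \<open>Experts are indexed by 0..<d, rounds by 1,2,...; vectors are nat => real
  (only components i < d matter). Losses: l t i = loss of expert i at round t.\<close>

fun fs_pred :: "nat \<Rightarrow> real \<Rightarrow> real \<Rightarrow> (nat \<Rightarrow> nat \<Rightarrow> real) \<Rightarrow> nat \<Rightarrow> nat \<Rightarrow> real" where
  "fs_pred d \<eta> \<alpha> l 0 = (\<lambda>j. 1 / real d)"
| "fs_pred d \<eta> \<alpha> l (Suc 0) = (\<lambda>j. 1 / real d)"
| "fs_pred d \<eta> \<alpha> l (Suc (Suc t)) =
     (let p = fs_pred d \<eta> \<alpha> l (Suc t);
          Z = (\<Sum>i<d. p i * exp (- \<eta> * l (Suc t) i));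
          v = (\<lambda>j. p j * exp (- \<eta> * l (Suc t) j) / Z)
      in (\<lambda>j. \<alpha> / real d + (1 - \<alpha>) * v j))"

definition dTV :: "nat \<Rightarrow> (nat \<Rightarrow> real) \<Rightarrow> (nat \<Rightarrow> real) \<Rightarrow> real" where
  "dTV d x y = (\<Sum>i\<in>{i. i < d \<and> x i \<ge> y i}. x i - y i)"

definition shifts :: "nat \<Rightarrow> (nat \<Rightarrow> nat \<Rightarrow> real) \<Rightarrow> nat \<Rightarrow> real" where
  "shifts d u T = (\<Sum>t=2..T. dTV d (u t) (u (t - 1)))"

definition norm1 :: "nat \<Rightarrow> (nat \<Rightarrow> real) \<Rightarrow> real" where
  "norm1 d x = (\<Sum>i<d. \<bar>x i\<bar>)"

definition bin_entropy :: "real \<Rightarrow> real" where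
  "bin_entropy x = (if x = 0 then 0 else - x * ln x) + (if x = 1 then 0 else - (1 - x) * ln (1 - x))"

end

theory Submission imports Defs "HOL-Probability.Hoeffding" begin

(* For fixed
   parameters eta > 0 and 0 < alpha < 1 with alpha (d + 1) <= d we show the
   regret bound
     eta U0 / 8 + (m0 ln d + m0 ln (1/alpha) + (U0 - m0) ln (1/(1 - alpha))) / eta
   in three steps:
   (1) per round, Hoeffding's lemma bounds the weighted loss of the prediction
       by the comparator loss plus eta |u_t| / 8 plus a log-ratio term
       sum_j u_tj (ln v_{t+1,j} - ln p_tj) / eta;
   (2) the mixing step of fixed share bounds consecutive log-ratio terms by the
       total-variation shift of the comparator, so the log-ratio terms telescope;
   (3) a linear estimate in the comparator budget m0, U0 finishes the bound.
   Choosing alpha = m0/U0 and the optimal eta turns this into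
   sqrt (U0/2 (m0 ln d + U0 h(m0/U0))).  When m0/U0 > d/(d+1) that choice is not
   admissible and we take alpha = 1 (uniform prediction), whose regret
   (1 - 1/d) U0 is already below the bound.  The second inequality of the
   corollary is the entropy estimate h(x) <= x (1 - ln x). *)

section \<open>Elementary analytic inequalities\<close>

text \<open>A logarithmic lower bound, used to compare the regret of the uniform
  predictor with the bound of the corollary.\<close>
lemma ln_ge_two_ratio:
  fixes y :: real assumes "1 \<le> y" shows "2 * (y - 1) / (y + 1) \<le> ln y"
proof -
  let ?f = "\<lambda>x::real. ln x - 2 * (x - 1) / (x + 1)"
  have "?f 1 \<le> ?f y"
  proof (rule DERIV_nonneg_imp_nondecreasing[OF assms])
    fix x :: real assume x: "1 \<le> x" "x \<le> y"
    show "\<exists>D. (?f has_real_derivative D) (at x) \<and> 0 \<le> D"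
    proof (intro exI conjI)
      show "(?f has_real_derivative (1/x - 4/(x+1)^2)) (at x)"
        using x by (auto intro!: derivative_eq_intros simp: field_simps power2_eq_square)
      have "1/x - 4/(x+1)^2 = (x-1)^2/(x*(x+1)^2)"
        using x by (simp add: divide_simps power2_eq_square; algebra)
      thus "0 \<le> 1/x - 4/(x+1)^2" using x by simp
    qed
  qed
  thus ?thesis by simp
qed

lemma bin_entropy_interior:
  fixes x :: real assumes "0 < x" "x < 1"
  shows "bin_entropy x = - x * ln x - (1 - x) * ln (1 - x)"
  using assms by (simp add: bin_entropy_def algebra_simps)

lemma bin_entropy_le:
  fixes x :: real assumes "0 < x" "x \<le> 1"
  shows "bin_entropy x \<le> x * (1 - ln x)"
proof (cases "x = 1")
  case True thus ?thesis by (simp add: bin_entropy_def)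
next
  case False
  hence x1: "x < 1" using assms by simp
  have "- ln (1 - x) = ln (1 / (1 - x))" using x1 by (simp add: ln_div)
  also have "\<dots> \<le> 1 / (1 - x) - 1" using x1 by (intro ln_le_minus_one) simp
  also have "\<dots> = x / (1 - x)" using x1 by (simp add: field_simps)
  finally have "(1 - x) * (- ln (1 - x)) \<le> (1 - x) * (x / (1 - x))"
    using x1 by (intro mult_left_mono) auto
  also have "\<dots> = x" using x1 by simp
  finally have "- (1 - x) * ln (1 - x) \<le> x" by (simp only: minus_mult_left)
  thus ?thesis using bin_entropy_interior[OF assms(1) x1] by (simp add: algebra_simps)
qed

lemma bin_entropy_ge:
  fixes x c :: real assumes "0 < x" "x \<le> 1" "1 \<le> c" "c * (1 - x) \<le> 1"
  shows "(1 - x) * ln c \<le> bin_entropy x"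
proof (cases "x = 1")
  case True thus ?thesis by (simp add: bin_entropy_def)
next
  case False
  hence x1: "x < 1" using assms by simp
  have "ln c \<le> ln (1 / (1 - x))" using assms x1 by (intro ln_mono) (auto simp: field_simps)
  also have "\<dots> = - ln (1 - x)" using x1 by (simp add: ln_div)
  finally have "(1 - x) * ln c \<le> - (1 - x) * ln (1 - x)"
    using x1 mult_left_mono[of "ln c" "- ln (1 - x)" "1 - x"] by (simp add: algebra_simps)
  moreover have "0 \<le> - x * ln x" using assms by (simp add: mult_nonneg_nonpos)
  ultimately show ?thesis using bin_entropy_interior[OF assms(1) x1] by (simp add: algebra_simps)
qed

text \<open>Optimal choice of the learning rate in a bound of the form eta U/8 + B/eta.\<close>
lemma balanced_learning_rate:
  fixes B U :: real assumes "0 < B" "0 < U"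
  shows "sqrt (8 * B / U) * U / 8 + B / sqrt (8 * B / U) = sqrt (U / 2 * B)"
proof -
  define \<eta> where "\<eta> = sqrt (8 * B / U)"
  have \<eta>: "0 < \<eta>" "\<eta>^2 = 8 * B / U" unfolding \<eta>_def using assms by auto
  have "\<eta> * U / 8 + B / \<eta> = (\<eta>^2 * U + 8 * B) / (8 * \<eta>)"
    using \<eta> by (simp add: field_simps power2_eq_square)
  also have "\<dots> = 2 * B / \<eta>" using \<eta> assms by (simp add: field_simps)
  also have "\<dots> = sqrt (U / 2 * B)"
  proof (rule real_sqrt_unique[symmetric])
    show "(2 * B / \<eta>)^2 = U / 2 * B"
      using \<eta> assms by (simp add: power_divide field_simps power2_eq_square)
  qed (use \<eta> assms in auto)
  finally show ?thesis unfolding \<eta>_def .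
qed

text \<open>Hoeffding's lemma for a loss in [0,1] drawn from a distribution p on d
  points, in the form of a bound on the log-partition function.\<close>
lemma log_mixture_hoeffding:
  fixes p l :: "nat \<Rightarrow> real" and \<eta> :: real
  assumes "\<eta> > 0" "\<And>i. i < d \<Longrightarrow> 0 \<le> p i" "(\<Sum>i<d. p i) = 1"
    "\<And>i. i < d \<Longrightarrow> 0 \<le> l i \<and> l i \<le> 1"
  shows "ln (\<Sum>i<d. p i * exp (- \<eta> * l i)) \<le> - \<eta> * (\<Sum>i<d. p i * l i) + \<eta>^2 / 8"
proof -
  define q where "q = (\<Sum>i<d. p i * l i)"
  have q1: "q \<le> 1" unfolding q_def using assms
    by (metis (no_types, lifting) lessThan_iff mult_left_le sum_mono)
  \<comment> \<open>convexity of exp: exp(-eta l) lies below the chord between l = 0 and l = 1\<close>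
  have chord: "exp (- \<eta> * l i) \<le> 1 - l i + l i * exp (- \<eta>)" if "i < d" for i
    using convex_onD[OF convex_on_exp[of 1], of "l i" 0 "- \<eta>"] assms(4)[OF that]
    by (simp add: mult.commute)
  have "(\<Sum>i<d. p i * exp (- \<eta> * l i)) \<le> (\<Sum>i<d. p i * (1 - l i + l i * exp (- \<eta>)))"
    by (intro sum_mono mult_left_mono) (use chord assms in auto)
  also have "\<dots> = (\<Sum>i<d. p i) - q + exp (- \<eta>) * q"
    by (simp add: q_def algebra_simps sum.distrib sum_subtractf sum_distrib_left)
  also have "\<dots> = exp (- \<eta>) * (1 + (1 - q) * (exp \<eta> - 1))"
    using assms(3) by (simp add: algebra_simps exp_minus field_simps)
  finally have Z: "(\<Sum>i<d. p i * exp (- \<eta> * l i)) \<le> exp (- \<eta>) * (1 + (1 - q) * (exp \<eta> - 1))" .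
  have "\<exists>i<d. 0 < p i"
  proof (rule ccontr)
    assume "\<not> (\<exists>i<d. 0 < p i)"
    hence "(\<Sum>i<d. p i) \<le> 0" by (intro sum_nonpos) (auto simp: not_less dest: leD)
    thus False using assms(3) by simp
  qed
  then obtain i where "i < d" "0 < p i" by blast
  hence Z_pos: "0 < (\<Sum>i<d. p i * exp (- \<eta> * l i))"
    using assms(2) by (intro sum_pos2[of _ i]) auto
  have mix_pos: "0 < 1 + (1 - q) * (exp \<eta> - 1)"
    using q1 assms(1) by (intro add_pos_nonneg mult_nonneg_nonneg) auto
  have "ln (\<Sum>i<d. p i * exp (- \<eta> * l i)) \<le> ln (exp (- \<eta>) * (1 + (1 - q) * (exp \<eta> - 1)))"
    using Z Z_pos by simp
  also have "\<dots> = - \<eta> + ln (1 + (1 - q) * (exp \<eta> - 1))"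
    using mix_pos by (simp add: ln_mult)
  also have "ln (1 + (1 - q) * (exp \<eta> - 1)) \<le> \<eta> * (1 - q) + \<eta>^2 / 8"
    using Hoeffdings_lemma_aux[of \<eta> "1 - q"] assms(1) q1 by simp
  finally show ?thesis by (simp add: q_def algebra_simps)
qed

section \<open>The fixed-share algorithm\<close>

definition fs_norm :: "nat \<Rightarrow> real \<Rightarrow> real \<Rightarrow> (nat \<Rightarrow> nat \<Rightarrow> real) \<Rightarrow> nat \<Rightarrow> real" where
  "fs_norm d \<eta> \<alpha> l t = (\<Sum>i<d. fs_pred d \<eta> \<alpha> l t i * exp (- \<eta> * l t i))"

definition fs_preweight :: "nat \<Rightarrow> real \<Rightarrow> real \<Rightarrow> (nat \<Rightarrow> nat \<Rightarrow> real) \<Rightarrow> nat \<Rightarrow> nat \<Rightarrow> real" where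
  "fs_preweight d \<eta> \<alpha> l t j = fs_pred d \<eta> \<alpha> l t j * exp (- \<eta> * l t j) / fs_norm d \<eta> \<alpha> l t"

lemma fs_pred_Suc:
  "1 \<le> t \<Longrightarrow> fs_pred d \<eta> \<alpha> l (Suc t) = (\<lambda>j. \<alpha> / real d + (1 - \<alpha>) * fs_preweight d \<eta> \<alpha> l t j)"
  by (cases t) (auto simp: fs_preweight_def fs_norm_def Let_def)

lemma fs_preweight_simplex:
  assumes "d \<ge> 1" "\<And>j. fs_pred d \<eta> \<alpha> l t j > 0"
  shows "0 < fs_preweight d \<eta> \<alpha> l t j" "(\<Sum>j<d. fs_preweight d \<eta> \<alpha> l t j) = 1"
proof -
  have Z: "0 < fs_norm d \<eta> \<alpha> l t"
    unfolding fs_norm_def using assms by (intro sum_pos) (auto simp: lessThan_empty_iff)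
  show "0 < fs_preweight d \<eta> \<alpha> l t j" using Z assms(2)[of j] by (simp add: fs_preweight_def)
  show "(\<Sum>j<d. fs_preweight d \<eta> \<alpha> l t j) = 1"
    using Z by (simp add: fs_preweight_def sum_divide_distrib[symmetric] fs_norm_def)
qed

lemma fs_preweight_le_1:
  assumes "d \<ge> 1" "\<And>j. fs_pred d \<eta> \<alpha> l t j > 0" "j < d"
  shows "fs_preweight d \<eta> \<alpha> l t j \<le> 1"
proof -
  have "fs_preweight d \<eta> \<alpha> l t j \<le> (\<Sum>j<d. fs_preweight d \<eta> \<alpha> l t j)"
    using assms fs_preweight_simplex(1)[OF assms(1,2)] by (intro member_le_sum) (auto intro: less_imp_le)
  thus ?thesis using fs_preweight_simplex(2)[OF assms(1,2)] by simp
qed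

text \<open>The pre-weights are at most 1, so their logarithms are nonpositive.\<close>
lemma weighted_log_preweight_nonpos:
  assumes "d \<ge> 1" "\<And>j. fs_pred d \<eta> \<alpha> l t j > 0" "\<And>j. j < d \<Longrightarrow> 0 \<le> a j"
  shows "(\<Sum>j<d. a j * ln (fs_preweight d \<eta> \<alpha> l t j)) \<le> 0"
  using assms fs_preweight_le_1[OF assms(1,2)] fs_preweight_simplex(1)[OF assms(1,2)]
  by (intro sum_nonpos mult_nonneg_nonpos) auto

lemma fs_pred_simplex:
  assumes "d \<ge> 1" "0 < \<alpha>" "\<alpha> \<le> 1" "1 \<le> t"
  shows "(\<forall>j. fs_pred d \<eta> \<alpha> l t j > 0) \<and> (\<Sum>j<d. fs_pred d \<eta> \<alpha> l t j) = 1"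
  using assms(4)
proof (induction t rule: nat_induct_at_least)
  case base
  then show ?case using assms by (simp add: Suc_le_eq)
next
  case (Suc n)
  hence pos: "\<And>j. fs_pred d \<eta> \<alpha> l n j > 0" by auto
  note v = fs_preweight_simplex[OF assms(1) pos]
  have "fs_pred d \<eta> \<alpha> l (Suc n) j > 0" for j
    using fs_pred_Suc[OF Suc(1)] v(1)[of j] assms by (simp add: add_pos_nonneg)
  moreover have "(\<Sum>j<d. fs_pred d \<eta> \<alpha> l (Suc n) j) = 1"
    using fs_pred_Suc[OF Suc(1)] v(2) assms(1) by (simp add: sum.distrib sum_distrib_left[symmetric])
  ultimately show ?case by simp
qed

section \<open>Regret of fixed share for fixed parameters\<close>

lemma norm1_nonneg_eq: "(\<And>i. i < d \<Longrightarrow> 0 \<le> x i) \<Longrightarrow> norm1 d x = (\<Sum>i<d. x i)"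
  unfolding norm1_def by (intro sum.cong) auto

lemma dTV_eq_sum: "dTV d x y = (\<Sum>i<d. if y i \<le> x i then x i - y i else 0)"
proof -
  have "{i. i < d \<and> x i \<ge> y i} = {i \<in> {..<d}. y i \<le> x i}" by auto
  thus ?thesis unfolding dTV_def by (simp only: sum.inter_filter[OF finite_lessThan])
qed

lemma round_regret:
  fixes p l u :: "nat \<Rightarrow> real" and \<eta> Z :: real
  assumes eta: "\<eta> > 0" and p_pos: "\<And>i. i < d \<Longrightarrow> 0 < p i" and p_sum: "(\<Sum>i<d. p i) = 1"
    and l: "\<And>i. i < d \<Longrightarrow> 0 \<le> l i \<and> l i \<le> 1" and u: "\<And>i. i < d \<Longrightarrow> 0 \<le> u i"
    and Z: "Z = (\<Sum>i<d. p i * exp (- \<eta> * l i))"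
  shows "(\<Sum>i<d. u i) * (\<Sum>i<d. p i * l i) - (\<Sum>i<d. u i * l i)
     \<le> \<eta> * (\<Sum>i<d. u i) / 8 + (\<Sum>i<d. u i * (ln (p i * exp (- \<eta> * l i) / Z) - ln (p i))) / \<eta>"
proof -
  have "{..<d} \<noteq> {}" using p_sum by auto
  hence Z_pos: "Z > 0" unfolding Z using p_pos by (intro sum_pos) auto
  have H: "ln Z \<le> - \<eta> * (\<Sum>i<d. p i * l i) + \<eta>^2 / 8"
    unfolding Z by (rule log_mixture_hoeffding) (use eta p_pos p_sum l less_imp_le in auto)
  have "(\<Sum>i<d. u i * (ln (p i * exp (- \<eta> * l i) / Z) - ln (p i))) = (\<Sum>i<d. u i * (- \<eta> * l i - ln Z))"
    using p_pos Z_pos by (intro sum.cong) (simp_all add: ln_div ln_mult less_imp_neq[symmetric])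
  also have "\<dots> = - \<eta> * (\<Sum>i<d. u i * l i) - (\<Sum>i<d. u i) * ln Z"
    by (simp add: algebra_simps sum_subtractf sum_distrib_left sum_distrib_right)
  finally have E: "(\<Sum>i<d. u i * (ln (p i * exp (- \<eta> * l i) / Z) - ln (p i))) / \<eta>
      = - (\<Sum>i<d. u i * l i) - (\<Sum>i<d. u i) * ln Z / \<eta>" using eta by (simp add: field_simps)
  have "(\<Sum>i<d. p i * l i) \<le> \<eta> / 8 - ln Z / \<eta>"
    using H eta by (simp add: field_simps power2_eq_square)
  hence "(\<Sum>i<d. u i) * (\<Sum>i<d. p i * l i) \<le> (\<Sum>i<d. u i) * (\<eta> / 8 - ln Z / \<eta>)"
    by (intro mult_left_mono sum_nonneg) (use u in auto)
  thus ?thesis unfolding E by (simp add: algebra_simps)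
qed

text \<open>The u_t-weighted log-ratio between the pre-weights v_{t+1} and the
  prediction p_t; its sum over the rounds is controlled by the mixing step.\<close>
definition fs_log_ratio ::
  "nat \<Rightarrow> real \<Rightarrow> real \<Rightarrow> (nat \<Rightarrow> nat \<Rightarrow> real) \<Rightarrow> (nat \<Rightarrow> nat \<Rightarrow> real) \<Rightarrow> nat \<Rightarrow> real" where
  "fs_log_ratio d \<eta> \<alpha> l u t =
     (\<Sum>j<d. u t j * (ln (fs_preweight d \<eta> \<alpha> l t j) - ln (fs_pred d \<eta> \<alpha> l t j)))"

text \<open>One coordinate of step (2): with c = (b - a)^+ the mass b is split into a
  part c charged at the price Ad of a fresh start and a part b - c charged at
  the price Bc of staying.\<close>
lemma mixing_coordinate_bound:
  fixes a b LV LP Ad Bc :: real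
  assumes "0 \<le> a" "0 \<le> b" "LV \<le> 0" "LV - LP \<le> Bc" "- LP \<le> Ad"
  shows "a * LV - b * LP \<le> (if a \<le> b then b - a else 0) * Ad + (b - (if a \<le> b then b - a else 0)) * Bc"
proof (cases "a \<le> b")
  case True
  have "a * (LV - LP) \<le> a * Bc" using assms by (intro mult_left_mono) auto
  moreover have "(b - a) * (- LP) \<le> (b - a) * Ad" using assms True by (intro mult_left_mono) auto
  ultimately show ?thesis using True by (simp add: algebra_simps)
next
  case False
  have "b * (LV - LP) \<le> b * Bc" using assms by (intro mult_left_mono) auto
  moreover have "(a - b) * LV \<le> 0" using assms False by (simp add: mult_nonneg_nonpos)
  ultimately show ?thesis using False by (simp add: algebra_simps)
qed

text \<open>Step (2): since p_{t+1} >= alpha/d and p_{t+1} >= (1 - alpha) v_{t+1}, passing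
  from the comparator a = u_t to b = u_{t+1} costs at most ln(d/alpha) per unit of
  shift and ln(1/(1 - alpha)) per unit of remaining mass.\<close>
lemma mixing_step_bound:
  assumes d: "d \<ge> 1" and \<alpha>: "0 < \<alpha>" "\<alpha> < 1" and t: "1 \<le> t"
    and a: "\<And>j. j < d \<Longrightarrow> 0 \<le> a j" and b: "\<And>j. j < d \<Longrightarrow> 0 \<le> b j"
  shows "(\<Sum>j<d. a j * ln (fs_preweight d \<eta> \<alpha> l t j) - b j * ln (fs_pred d \<eta> \<alpha> l (Suc t) j))
     \<le> dTV d b a * ln (real d / \<alpha>) + ((\<Sum>j<d. b j) - dTV d b a) * ln (1 / (1 - \<alpha>))"
proof -
  have pos: "\<And>j. fs_pred d \<eta> \<alpha> l t j > 0" using fs_pred_simplex[OF d \<alpha>(1) _ t] \<alpha> by auto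
  let ?V = "fs_preweight d \<eta> \<alpha> l t" and ?P = "fs_pred d \<eta> \<alpha> l (Suc t)"
  let ?c = "\<lambda>j. if a j \<le> b j then b j - a j else 0"
  have "(\<Sum>j<d. a j * ln (?V j) - b j * ln (?P j))
     \<le> (\<Sum>j<d. ?c j * ln (real d / \<alpha>) + (b j - ?c j) * ln (1 / (1 - \<alpha>)))"
  proof (intro sum_mono mixing_coordinate_bound)
    fix j assume j: "j \<in> {..<d}"
    show "0 \<le> a j" "0 \<le> b j" using j a b by auto
    have V: "0 < ?V j" "?V j \<le> 1"
      using fs_preweight_simplex(1)[OF d pos] fs_preweight_le_1[OF d pos] j by auto
    show "ln (?V j) \<le> 0" using V by simp
    have P: "?P j = \<alpha> / real d + (1 - \<alpha>) * ?V j" using fs_pred_Suc[OF t] by simp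
    have P_stay: "(1 - \<alpha>) * ?V j \<le> ?P j" using P \<alpha> d by simp
    have P_fresh: "\<alpha> / real d \<le> ?P j" using P \<alpha> V by simp
    have "0 < \<alpha> / real d" using \<alpha> d by simp
    hence P_pos: "0 < ?P j" using P_fresh by linarith
    have "ln (?V j) - ln (?P j) = ln (?V j / ?P j)" using V P_pos by (simp add: ln_div)
    also have "\<dots> \<le> ln (1 / (1 - \<alpha>))"
      using P_stay P_pos V \<alpha> by (intro ln_mono) (auto simp: field_simps)
    finally show "ln (?V j) - ln (?P j) \<le> ln (1 / (1 - \<alpha>))" .
    have "ln (\<alpha> / real d) \<le> ln (?P j)" using P_fresh \<alpha> d by (intro ln_mono) auto
    thus "- ln (?P j) \<le> ln (real d / \<alpha>)" using \<alpha> d by (simp add: ln_div)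
  qed
  also have "\<dots> = (\<Sum>j<d. ?c j) * ln (real d / \<alpha>) + ((\<Sum>j<d. b j) - (\<Sum>j<d. ?c j)) * ln (1 / (1 - \<alpha>))"
    by (simp add: sum.distrib sum_distrib_right sum_distrib_left sum_subtractf algebra_simps)
  also have "(\<Sum>j<d. ?c j) = dTV d b a" by (simp add: dTV_eq_sum)
  finally show ?thesis .
qed

text \<open>Telescoping the mixing step over rounds 1..T (the first round starts from
  the uniform prediction, whence the term |u_1| ln d).\<close>
lemma log_ratio_telescope:
  assumes d: "d \<ge> 1" and \<alpha>: "0 < \<alpha>" "\<alpha> < 1"
    and u: "\<forall>t\<in>{1..N}. \<forall>i<d. 0 \<le> u t i"
  shows "1 \<le> T \<Longrightarrow> T \<le> N \<Longrightarrow>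
    (\<Sum>t=1..T. fs_log_ratio d \<eta> \<alpha> l u t)
    \<le> (\<Sum>j<d. u 1 j) * ln (real d)
      + (\<Sum>t=2..T. dTV d (u t) (u (t-1)) * ln (real d / \<alpha>)
           + ((\<Sum>j<d. u t j) - dTV d (u t) (u (t-1))) * ln (1 / (1 - \<alpha>)))
      + (\<Sum>j<d. u T j * ln (fs_preweight d \<eta> \<alpha> l T j))"
proof (induction T rule: nat_induct_at_least)
  case base
  have "fs_log_ratio d \<eta> \<alpha> l u 1
     = (\<Sum>j<d. u 1 j * ln (fs_preweight d \<eta> \<alpha> l 1 j) + u 1 j * ln (real d))"
    unfolding fs_log_ratio_def using d by (intro sum.cong refl) (simp add: ln_div algebra_simps)
  then show ?case by (simp add: sum.distrib sum_distrib_right)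
next
  case (Suc T)
  let ?G = "\<lambda>t. dTV d (u t) (u (t-1)) * ln (real d / \<alpha>)
           + ((\<Sum>j<d. u t j) - dTV d (u t) (u (t-1))) * ln (1 / (1 - \<alpha>))"
  let ?last = "\<lambda>t. \<Sum>j<d. u t j * ln (fs_preweight d \<eta> \<alpha> l t j)"
  have step: "?last T + fs_log_ratio d \<eta> \<alpha> l u (Suc T) \<le> ?G (Suc T) + ?last (Suc T)"
  proof -
    have "?last T + fs_log_ratio d \<eta> \<alpha> l u (Suc T)
       = (\<Sum>j<d. u T j * ln (fs_preweight d \<eta> \<alpha> l T j) - u (Suc T) j * ln (fs_pred d \<eta> \<alpha> l (Suc T) j))
         + ?last (Suc T)"
      unfolding fs_log_ratio_def by (simp add: sum.distrib sum_subtractf algebra_simps)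
    also have "\<dots> \<le> ?G (Suc T) + ?last (Suc T)"
      using mixing_step_bound[OF d \<alpha> Suc(1), of "u T" "u (Suc T)" \<eta> l] u Suc by auto
    finally show ?thesis .
  qed
  have "(\<Sum>t=2..Suc T. ?G t) = (\<Sum>t=2..T. ?G t) + ?G (Suc T)" using Suc(1) by simp
  moreover have "(\<Sum>t=1..Suc T. fs_log_ratio d \<eta> \<alpha> l u t)
      = (\<Sum>t=1..T. fs_log_ratio d \<eta> \<alpha> l u t) + fs_log_ratio d \<eta> \<alpha> l u (Suc T)" by simp
  ultimately show ?case using Suc step by linarith
qed

text \<open>Here s = |u_1|, m is the
  shift and W the remaining mass; a fresh start is at least as expensive as
  staying, so the worst case is s + m = m0 and s + W = U0.\<close>
lemma budget_estimate:
  fixes s m W m0 U0 Ld A Bc :: real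
  assumes "0 \<le> s" "0 \<le> m" "s + m \<le> m0" "s + W \<le> U0" "0 \<le> Ld" "0 \<le> A" "0 \<le> Bc" "Bc \<le> Ld + A"
  shows "s * Ld + m * (Ld + A) + (W - m) * Bc \<le> m0 * Ld + m0 * A + (U0 - m0) * Bc"
proof -
  have "m * A \<le> (s + m) * A" "(W - m) * Bc \<le> (U0 - (s + m)) * Bc"
    using assms by (intro mult_right_mono; simp)+
  hence "s * Ld + m * (Ld + A) + (W - m) * Bc \<le> (s + m) * Ld + (s + m) * A + (U0 - (s + m)) * Bc"
    by (simp add: algebra_simps)
  also have "\<dots> = (s + m) * (Ld + A - Bc) + U0 * Bc" by (simp add: algebra_simps)
  also have "\<dots> \<le> m0 * (Ld + A - Bc) + U0 * Bc" using assms by (intro add_right_mono mult_right_mono) auto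
  also have "\<dots> = m0 * Ld + m0 * A + (U0 - m0) * Bc" by (simp add: algebra_simps)
  finally show ?thesis .
qed

text \<open>Steps (2) and (3) combined: the total log-ratio is bounded in terms of the
  comparator budget.  The hypothesis alpha (d + 1) <= d says that a fresh start
  costs at least as much as staying.\<close>
lemma log_ratio_sum_bound:
  assumes d: "d \<ge> 1" and \<alpha>: "0 < \<alpha>" "\<alpha> < 1" "\<alpha> * (real d + 1) \<le> real d" and T: "T \<ge> 1"
    and u: "\<forall>t\<in>{1..T}. \<forall>i<d. 0 \<le> u t i"
    and shift_budget: "norm1 d (u 1) + shifts d u T \<le> m0"
    and mass_budget: "(\<Sum>t=1..T. norm1 d (u t)) \<le> U0"
  shows "(\<Sum>t=1..T. fs_log_ratio d \<eta> \<alpha> l u t)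
     \<le> m0 * ln (real d) + m0 * ln (1 / \<alpha>) + (U0 - m0) * ln (1 / (1 - \<alpha>))"
proof -
  have norm: "norm1 d (u t) = (\<Sum>j<d. u t j)" if "t \<in> {1..T}" for t
    using u that by (intro norm1_nonneg_eq) auto
  define s where "s = norm1 d (u 1)"
  define m where "m = shifts d u T"
  define W where "W = (\<Sum>t=2..T. norm1 d (u t))"
  have last: "(\<Sum>j<d. u T j * ln (fs_preweight d \<eta> \<alpha> l T j)) \<le> 0"
    using fs_pred_simplex[OF d \<alpha>(1) _ T] \<alpha> u T
    by (intro weighted_log_preweight_nonpos[OF d]) auto
  have "(\<Sum>t=2..T. dTV d (u t) (u (t-1)) * ln (real d / \<alpha>)
           + ((\<Sum>j<d. u t j) - dTV d (u t) (u (t-1))) * ln (1 / (1 - \<alpha>)))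
      = (\<Sum>t=2..T. dTV d (u t) (u (t-1)) * ln (real d / \<alpha>)
           + (norm1 d (u t) - dTV d (u t) (u (t-1))) * ln (1 / (1 - \<alpha>)))"
    by (intro sum.cong refl) (simp add: norm)
  also have "\<dots> = m * ln (real d / \<alpha>) + (W - m) * ln (1 / (1 - \<alpha>))"
    unfolding m_def W_def shifts_def
    by (simp add: sum.distrib sum_subtractf sum_distrib_right sum_distrib_left algebra_simps)
  finally have shift_terms: "(\<Sum>t=2..T. dTV d (u t) (u (t-1)) * ln (real d / \<alpha>)
           + ((\<Sum>j<d. u t j) - dTV d (u t) (u (t-1))) * ln (1 / (1 - \<alpha>)))
      = m * ln (real d / \<alpha>) + (W - m) * ln (1 / (1 - \<alpha>))" .
  have ln_d\<alpha>: "ln (real d / \<alpha>) = ln (real d) + ln (1 / \<alpha>)" using \<alpha> d by (simp add: ln_div)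
  have "(\<Sum>t=1..T. fs_log_ratio d \<eta> \<alpha> l u t)
      \<le> s * ln (real d) + m * (ln (real d) + ln (1 / \<alpha>)) + (W - m) * ln (1 / (1 - \<alpha>))"
    using log_ratio_telescope[OF d \<alpha>(1,2) u T order.refl, of \<eta> l] last shift_terms ln_d\<alpha> norm[of 1] T
    by (simp add: s_def)
  also have "\<dots> \<le> m0 * ln (real d) + m0 * ln (1 / \<alpha>) + (U0 - m0) * ln (1 / (1 - \<alpha>))"
  proof (rule budget_estimate)
    show "0 \<le> s" unfolding s_def norm1_def by (simp add: sum_nonneg)
    show "0 \<le> m" unfolding m_def shifts_def dTV_def by (intro sum_nonneg) auto
    show "s + m \<le> m0" using shift_budget unfolding s_def m_def .
    have "s + W = (\<Sum>t=1..T. norm1 d (u t))" unfolding s_def W_def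
      using sum.atLeast_Suc_atMost[OF T, of "\<lambda>t. norm1 d (u t)"] by (simp add: numeral_2_eq_2)
    thus "s + W \<le> U0" using mass_budget by simp
    show "0 \<le> ln (real d)" "0 \<le> ln (1 / \<alpha>)" "0 \<le> ln (1 / (1 - \<alpha>))" using d \<alpha> by simp_all
    have "ln (1 / (1 - \<alpha>)) \<le> ln (real d / \<alpha>)"
      using \<alpha> d by (intro ln_mono) (auto simp: field_simps)
    thus "ln (1 / (1 - \<alpha>)) \<le> ln (real d) + ln (1 / \<alpha>)" using ln_d\<alpha> by simp
  qed
  finally show ?thesis .
qed

definition regret ::
  "nat \<Rightarrow> real \<Rightarrow> real \<Rightarrow> (nat \<Rightarrow> nat \<Rightarrow> real) \<Rightarrow> (nat \<Rightarrow> nat \<Rightarrow> real) \<Rightarrow> nat \<Rightarrow> real" where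
  "regret d \<eta> \<alpha> l u T = (\<Sum>t=1..T. norm1 d (u t) * (\<Sum>i<d. fs_pred d \<eta> \<alpha> l t i * l t i))
     - (\<Sum>t=1..T. \<Sum>i<d. u t i * l t i)"

theorem fixed_share_regret:
  assumes d: "d \<ge> 1" and \<alpha>: "0 < \<alpha>" "\<alpha> < 1" "\<alpha> * (real d + 1) \<le> real d" and eta: "\<eta> > 0"
    and T: "T \<ge> 1"
    and l: "\<forall>t\<in>{1..T}. \<forall>i<d. 0 \<le> l t i \<and> l t i \<le> 1"
    and u: "\<forall>t\<in>{1..T}. \<forall>i<d. 0 \<le> u t i"
    and shift_budget: "norm1 d (u 1) + shifts d u T \<le> m0"
    and mass_budget: "(\<Sum>t=1..T. norm1 d (u t)) \<le> U0"
  shows "regret d \<eta> \<alpha> l u T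
     \<le> \<eta> * U0 / 8 + (m0 * ln (real d) + m0 * ln (1 / \<alpha>) + (U0 - m0) * ln (1 / (1 - \<alpha>))) / \<eta>"
proof -
  let ?p = "fs_pred d \<eta> \<alpha> l"
  have round: "norm1 d (u t) * (\<Sum>i<d. ?p t i * l t i) - (\<Sum>i<d. u t i * l t i)
       \<le> \<eta> * norm1 d (u t) / 8 + fs_log_ratio d \<eta> \<alpha> l u t / \<eta>" if t: "t \<in> {1..T}" for t
  proof -
    have p: "(\<forall>j. ?p t j > 0) \<and> (\<Sum>j<d. ?p t j) = 1" using fs_pred_simplex[OF d \<alpha>(1)] \<alpha> t by auto
    have "norm1 d (u t) = (\<Sum>j<d. u t j)" using u t by (intro norm1_nonneg_eq) auto
    with round_regret[OF eta, where p="?p t" and l="l t" and u="u t" and Z="fs_norm d \<eta> \<alpha> l t"] p l u t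
    show ?thesis by (simp add: fs_norm_def fs_preweight_def fs_log_ratio_def)
  qed
  have "regret d \<eta> \<alpha> l u T
      = (\<Sum>t=1..T. norm1 d (u t) * (\<Sum>i<d. ?p t i * l t i) - (\<Sum>i<d. u t i * l t i))"
    by (simp add: regret_def sum_subtractf)
  also have "\<dots> \<le> (\<Sum>t=1..T. \<eta> * norm1 d (u t) / 8 + fs_log_ratio d \<eta> \<alpha> l u t / \<eta>)"
    by (intro sum_mono round)
  also have "\<dots> = \<eta> / 8 * (\<Sum>t=1..T. norm1 d (u t)) + (\<Sum>t=1..T. fs_log_ratio d \<eta> \<alpha> l u t) / \<eta>"
    by (simp add: sum.distrib sum_distrib_left sum_divide_distrib)
  also have "\<dots> \<le> \<eta> / 8 * U0 + (m0 * ln (real d) + m0 * ln (1 / \<alpha>) + (U0 - m0) * ln (1 / (1 - \<alpha>))) / \<eta>"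
    using eta by (intro add_mono mult_left_mono divide_right_mono mass_budget
        log_ratio_sum_bound[OF d \<alpha> T u shift_budget mass_budget]) auto
  finally show ?thesis by (simp add: algebra_simps)
qed

lemma fs_pred_uniform: "fs_pred d \<eta> 1 l t = (\<lambda>j. 1 / real d)"
proof (cases t)
  case (Suc k) thus ?thesis by (cases k) (auto simp: Let_def)
qed simp

lemma mean_minus_entry_le:
  fixes l :: "nat \<Rightarrow> real"
  assumes j: "j < d" and l: "\<And>i. i < d \<Longrightarrow> 0 \<le> l i \<and> l i \<le> 1"
  shows "(\<Sum>i<d. l i) / real d - l j \<le> 1 - 1 / real d"
proof -
  have "(\<Sum>i<d. l i) = l j + (\<Sum>i\<in>{..<d} - {j}. l i)" using j by (simp add: sum.remove)
  also have "(\<Sum>i\<in>{..<d} - {j}. l i) \<le> real (card ({..<d} - {j})) * 1"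
    by (rule sum_bounded_above) (use l in auto)
  also have "card ({..<d} - {j}) = d - 1" using j by simp
  finally have S: "(\<Sum>i<d. l i) \<le> l j + real (d - 1)" by simp
  have d: "real d > 0" using j by simp
  have "(\<Sum>i<d. l i) / real d - l j \<le> (l j + real (d - 1)) / real d - l j"
    using S d by (simp add: divide_right_mono)
  also have "\<dots> = 1 - 1 / real d - l j * (1 - 1 / real d)"
    using j d by (simp add: field_simps of_nat_diff)
  also have "\<dots> \<le> 1 - 1 / real d" using l[OF j] d by (simp add: mult_nonneg_nonneg)
  finally show ?thesis .
qed

lemma uniform_regret:
  assumes d: "d \<ge> 1"
    and l: "\<forall>t\<in>{1..T}. \<forall>i<d. 0 \<le> l t i \<and> l t i \<le> 1"
    and u: "\<forall>t\<in>{1..T}. \<forall>i<d. 0 \<le> u t i"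
    and mass_budget: "(\<Sum>t=1..T. norm1 d (u t)) \<le> U0"
  shows "regret d \<eta> 1 l u T \<le> (1 - 1 / real d) * U0"
proof -
  have round: "norm1 d (u t) * (\<Sum>i<d. fs_pred d \<eta> 1 l t i * l t i) - (\<Sum>i<d. u t i * l t i)
      \<le> (1 - 1 / real d) * norm1 d (u t)" if t: "t \<in> {1..T}" for t
  proof -
    have norm: "norm1 d (u t) = (\<Sum>j<d. u t j)" using u t by (intro norm1_nonneg_eq) auto
    have "norm1 d (u t) * (\<Sum>i<d. fs_pred d \<eta> 1 l t i * l t i) - (\<Sum>i<d. u t i * l t i)
        = (\<Sum>j<d. u t j * ((\<Sum>i<d. l t i) / real d - l t j))"
      unfolding norm fs_pred_uniform
      by (simp add: sum_distrib_right sum_subtractf algebra_simps sum_divide_distrib)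
    also have "\<dots> \<le> (\<Sum>j<d. u t j * (1 - 1 / real d))"
      by (intro sum_mono mult_left_mono mean_minus_entry_le) (use l u t in auto)
    also have "\<dots> = (1 - 1 / real d) * norm1 d (u t)"
      unfolding norm by (simp add: sum_distrib_right mult.commute)
    finally show ?thesis .
  qed
  have "regret d \<eta> 1 l u T
      = (\<Sum>t=1..T. norm1 d (u t) * (\<Sum>i<d. fs_pred d \<eta> 1 l t i * l t i) - (\<Sum>i<d. u t i * l t i))"
    by (simp add: regret_def sum_subtractf)
  also have "\<dots> \<le> (\<Sum>t=1..T. (1 - 1 / real d) * norm1 d (u t))" by (intro sum_mono round)
  also have "\<dots> = (1 - 1 / real d) * (\<Sum>t=1..T. norm1 d (u t))" by (simp add: sum_distrib_left)
  also have "\<dots> \<le> (1 - 1 / real d) * U0"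
    using mass_budget d by (intro mult_left_mono) (auto simp: field_simps)
  finally show ?thesis .
qed

section \<open>Tuning the parameters\<close>

text \<open>Positivity of the entropy makes the tuned learning rate well defined.\<close>
lemma bin_entropy_pos:
  fixes x :: real assumes "0 < x" "x < 1" shows "0 < bin_entropy x"
proof -
  have "0 < - x * ln x" using assms by (simp add: mult_pos_neg ln_less_zero)
  moreover have "0 < (1 - x) * (- ln (1 - x))" using assms by (intro mult_pos_pos) (auto intro: ln_less_zero)
  ultimately show ?thesis using bin_entropy_interior[OF assms] by simp
qed

lemma budget_ratio_lt_1:
  fixes m0 U0 :: real assumes "0 < m0" "m0 * (real d + 1) \<le> U0 * real d" shows "m0 < U0"
proof -
  have "m0 * real d < U0 * real d" using assms by (simp add: algebra_simps)
  thus ?thesis by (simp add: mult_less_cancel_right)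
qed

lemma tuned_fixed_share_regret:
  assumes d: "d \<ge> 1" and m0: "0 < m0" and small: "m0 * (real d + 1) \<le> U0 * real d"
    and T: "T \<ge> 1"
    and l: "\<forall>t\<in>{1..T}. \<forall>i<d. 0 \<le> l t i \<and> l t i \<le> 1"
    and u: "\<forall>t\<in>{1..T}. \<forall>i<d. 0 \<le> u t i"
    and shift_budget: "norm1 d (u 1) + shifts d u T \<le> m0"
    and mass_budget: "(\<Sum>t=1..T. norm1 d (u t)) \<le> U0"
  defines "B \<equiv> m0 * ln (real d) + U0 * bin_entropy (m0 / U0)"
  shows "regret d (sqrt (8 * B / U0)) (m0 / U0) l u T \<le> sqrt (U0 / 2 * B)"
proof -
  define x where "x = m0 / U0"
  have "0 < m0 * (real d + 1)" using m0 by simp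
  hence "0 < U0 * real d" using small by linarith
  hence U0: "0 < U0" by (simp add: zero_less_mult_iff)
  have m0_eq: "m0 = U0 * x" unfolding x_def using U0 by simp
  have x: "0 < x" "x < 1" "x * (real d + 1) \<le> real d"
    using budget_ratio_lt_1[OF m0 small] small m0 U0 by (auto simp: x_def field_simps)
  have B_pos: "0 < B"
    unfolding B_def x_def[symmetric] using bin_entropy_pos[OF x(1,2)] U0 m0 d
    by (intro add_nonneg_pos) auto
  have B_eq: "m0 * ln (real d) + m0 * ln (1 / x) + (U0 - m0) * ln (1 / (1 - x)) = B"
  proof -
    have "B = m0 * ln (real d) + U0 * bin_entropy x" by (simp add: B_def x_def)
    thus ?thesis using x unfolding m0_eq bin_entropy_interior[OF x(1,2)] by (simp add: ln_div algebra_simps)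
  qed
  have "regret d (sqrt (8 * B / U0)) x l u T
      \<le> sqrt (8 * B / U0) * U0 / 8 + B / sqrt (8 * B / U0)"
    using fixed_share_regret[OF d x _ T l u shift_budget mass_budget] B_pos U0 by (simp add: B_eq)
  thus ?thesis unfolding balanced_learning_rate[OF B_pos U0] x_def .
qed

text \<open>Case m0/U0 > d/(d+1): the uniform forecaster (alpha = 1) already attains
  the bound, because then U0 ln d <= m0 ln d + U0 h(m0/U0) and
  2 (1 - 1/d)^2 <= ln d.\<close>
lemma uniform_regret_within_bound:
  assumes d: "d \<ge> 1" and m0: "0 < m0" "m0 \<le> U0" and large: "U0 * real d < m0 * (real d + 1)"
    and l: "\<forall>t\<in>{1..T}. \<forall>i<d. 0 \<le> l t i \<and> l t i \<le> 1"
    and u: "\<forall>t\<in>{1..T}. \<forall>i<d. 0 \<le> u t i"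
    and mass_budget: "(\<Sum>t=1..T. norm1 d (u t)) \<le> U0"
  shows "regret d \<eta> 1 l u T \<le> sqrt (U0 / 2 * (m0 * ln (real d) + U0 * bin_entropy (m0 / U0)))"
proof -
  define x where "x = m0 / U0"
  define B where "B = m0 * ln (real d) + U0 * bin_entropy x"
  have U0: "0 < U0" using m0 by simp
  have x: "0 < x" "x \<le> 1" using m0 U0 by (auto simp: x_def)
  have "real d * (1 - x) \<le> 1"
    using large U0 x by (simp add: x_def field_simps)
  hence "(1 - x) * ln (real d) \<le> bin_entropy x" using bin_entropy_ge[OF x] d by simp
  hence "U0 * ((1 - x) * ln (real d)) \<le> U0 * bin_entropy x" using U0 by simp
  hence B_ge: "U0 * ln (real d) \<le> B" unfolding B_def x_def using U0 by (simp add: algebra_simps)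
  have "2 * (1 - 1 / real d)^2 \<le> 2 * (real d - 1) / (real d + 1)"
  proof -
    have "(real d - 1)^2 * (real d + 1) = (real d - 1) * (real d ^ 2 - 1)"
      by (simp add: power2_eq_square algebra_simps)
    also have "\<dots> \<le> (real d - 1) * real d ^ 2" using d by (intro mult_left_mono) auto
    finally show ?thesis using d by (simp add: field_simps power2_eq_square)
  qed
  also have "\<dots> \<le> ln (real d)" using d by (intro ln_ge_two_ratio) simp
  finally have d_ln: "2 * (1 - 1 / real d)^2 \<le> ln (real d)" .
  have "regret d \<eta> 1 l u T \<le> (1 - 1 / real d) * U0"
    by (rule uniform_regret[OF d l u mass_budget])
  also have "\<dots> \<le> sqrt (U0 / 2 * B)"
  proof (rule real_le_rsqrt)
    have "((1 - 1 / real d) * U0)^2 = (1 - 1 / real d)^2 * U0 * U0" by (simp add: power2_eq_square)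
    also have "\<dots> \<le> (ln (real d) / 2) * U0 * U0" using d_ln U0 by (intro mult_right_mono) auto
    also have "\<dots> = U0 / 2 * (U0 * ln (real d))" by simp
    also have "\<dots> \<le> U0 / 2 * B" using B_ge U0 by (intro mult_left_mono) auto
    finally show "((1 - 1 / real d) * U0)^2 \<le> U0 / 2 * B" .
  qed
  finally show ?thesis unfolding B_def x_def .
qed

lemma entropy_bound_simplified:
  fixes m0 U0 :: real assumes m0: "0 < m0" "m0 \<le> U0" and d: "d \<ge> 1"
  shows "sqrt (U0 / 2 * (m0 * ln (real d) + U0 * bin_entropy (m0 / U0)))
     \<le> sqrt (U0 * m0 / 2 * (ln (real d) + ln (exp 1 * U0 / m0)))"
proof -
  have U0: "0 < U0" using m0 by simp
  have "U0 * bin_entropy (m0 / U0) \<le> U0 * (m0 / U0 * (1 - ln (m0 / U0)))"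
    using bin_entropy_le[of "m0 / U0"] m0 U0 by (intro mult_left_mono) auto
  also have "\<dots> = m0 * ln (exp 1 * U0 / m0)" using m0 U0 by (simp add: ln_mult ln_div algebra_simps)
  finally have "U0 / 2 * (m0 * ln (real d) + U0 * bin_entropy (m0 / U0))
      \<le> U0 / 2 * (m0 * ln (real d) + m0 * ln (exp 1 * U0 / m0))"
    using U0 by (intro mult_left_mono) auto
  thus ?thesis by (simp add: algebra_simps)
qed

lemma fixed_share_tuning:
  assumes d: "d \<ge> 1" and m0: "0 < m0" "m0 \<le> U0"
  shows "\<exists>\<eta>>0. \<exists>\<alpha>. 0 \<le> \<alpha> \<and> \<alpha> \<le> 1 \<and>
    (\<forall>T l u. T \<ge> 1
       \<and> (\<forall>t\<in>{1..T}. \<forall>i<d. 0 \<le> l t i \<and> l t i \<le> 1)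
       \<and> (\<forall>t\<in>{1..T}. \<forall>i<d. 0 \<le> u t i)
       \<and> norm1 d (u 1) + shifts d u T \<le> m0
       \<and> (\<Sum>t=1..T. norm1 d (u t)) \<le> U0
     \<longrightarrow> regret d \<eta> \<alpha> l u T \<le> sqrt (U0 / 2 * (m0 * ln (real d) + U0 * bin_entropy (m0 / U0))))"
proof (cases "m0 * (real d + 1) \<le> U0 * real d")
  case True
  define B where "B = m0 * ln (real d) + U0 * bin_entropy (m0 / U0)"
  have "0 < B" unfolding B_def using bin_entropy_pos[of "m0 / U0"] budget_ratio_lt_1[OF m0(1) True] m0 d
    by (intro add_nonneg_pos mult_pos_pos) (auto simp: field_simps)
  hence "sqrt (8 * B / U0) > 0" using m0 by simp
  moreover have "0 \<le> m0 / U0" "m0 / U0 \<le> 1" using m0 by auto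
  ultimately show ?thesis
    using tuned_fixed_share_regret[OF d m0(1) True] unfolding B_def by blast
next
  case False
  hence "U0 * real d < m0 * (real d + 1)" by simp
  from uniform_regret_within_bound[OF d m0 this]
  have "\<forall>T l u. T \<ge> 1
       \<and> (\<forall>t\<in>{1..T}. \<forall>i<d. 0 \<le> l t i \<and> l t i \<le> 1)
       \<and> (\<forall>t\<in>{1..T}. \<forall>i<d. 0 \<le> u t i)
       \<and> norm1 d (u 1) + shifts d u T \<le> m0
       \<and> (\<Sum>t=1..T. norm1 d (u t)) \<le> U0
     \<longrightarrow> regret d 1 1 l u T \<le> sqrt (U0 / 2 * (m0 * ln (real d) + U0 * bin_entropy (m0 / U0)))"
    by blast
  thus ?thesis by (intro exI[of _ "1::real"] conjI) auto
qed

theorem corollary1: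
  fixes d :: nat and m0 U0 :: real
  assumes "d \<ge> 1" and "m0 > 0" and "U0 > 0" and "m0 \<le> U0"
  shows "\<exists>\<eta>>0. \<exists>\<alpha>. 0 \<le> \<alpha> \<and> \<alpha> \<le> 1 \<and>
    (\<forall>T (l :: nat \<Rightarrow> nat \<Rightarrow> real) (u :: nat \<Rightarrow> nat \<Rightarrow> real).
       T \<ge> 1
       \<and> (\<forall>t\<in>{1..T}. \<forall>i<d. 0 \<le> l t i \<and> l t i \<le> 1)
       \<and> (\<forall>t\<in>{1..T}. \<forall>i<d. 0 \<le> u t i)
       \<and> norm1 d (u 1) + shifts d u T \<le> m0
       \<and> (\<Sum>t=1..T. norm1 d (u t)) \<le> U0
     \<longrightarrow>
       (\<Sum>t=1..T. norm1 d (u t) * (\<Sum>i<d. fs_pred d \<eta> \<alpha> l t i * l t i))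
         - (\<Sum>t=1..T. \<Sum>i<d. u t i * l t i)
         \<le> sqrt (U0 / 2 * (m0 * ln (real d) + U0 * bin_entropy (m0 / U0)))
       \<and> sqrt (U0 / 2 * (m0 * ln (real d) + U0 * bin_entropy (m0 / U0)))
         \<le> sqrt (U0 * m0 / 2 * (ln (real d) + ln (exp 1 * U0 / m0))))"
proof -
  note simplified = entropy_bound_simplified[OF assms(2,4,1)]
  obtain \<eta> \<alpha> where "\<eta> > 0" "0 \<le> \<alpha>" "\<alpha> \<le> 1" and bound:
    "\<forall>T l u. T \<ge> 1
       \<and> (\<forall>t\<in>{1..T}. \<forall>i<d. 0 \<le> l t i \<and> l t i \<le> 1)
       \<and> (\<forall>t\<in>{1..T}. \<forall>i<d. 0 \<le> u t i)
       \<and> norm1 d (u 1) + shifts d u T \<le> m0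
       \<and> (\<Sum>t=1..T. norm1 d (u t)) \<le> U0
     \<longrightarrow> regret d \<eta> \<alpha> l u T \<le> sqrt (U0 / 2 * (m0 * ln (real d) + U0 * bin_entropy (m0 / U0)))"
    using fixed_share_tuning[OF assms(1,2,4)] by blast
  show ?thesis
    using \<open>\<eta> > 0\<close> \<open>0 \<le> \<alpha>\<close> \<open>\<alpha> \<le> 1\<close> bound simplified unfolding regret_def by blast
qed

end
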